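(* Every almost reciprocal Puiseux monoid is a length-finite-factorization monoid (LFFM).
   Context: A Puiseux monoid is an additive submonoid of $(\mathbb{Q}_{\ge 0},+)$. An almost reciprocal Puiseux monoid is a monoid of the form $\langle \frac{c_n}{d_n} \mid n \in \mathbb{N} \rangle$, where $(d_n)_{n\ge 1}$ is a strictly increasing sequence of positive integers whose terms are pairwise relatively prime, and $(c_n)_{n \ge 1}$ is a sequence of positive integers with $\gcd(c_n,d_n)=1$ for every $n$. An atom of $M$ is a nonzero element $a$ such that $a=x+y$ with $x,y\in M$ forces $x=0$ or $y=0$; $M$ is atomic if each element is a finite sum of atoms. For nonzero $x \in M$, a factorization of $x$ is a formal (unordered) sum $a_1+\dots+a_\ell$ of atoms whose value is $x$, of length $\ell$; $\mathsf{Z}(x,\ell)$ denotes the set of factorizations of $x$ of length $\ell$. $M$ is an LFFM if $M$ is atomic and $\mathsf{Z}(x,\ell)$ is finite for every nonzero $x \in M$ and every $\ell \in \mathbb{N}$. *)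

theory Defs
  imports Complex_Main "HOL-Library.Multiset"
begin

inductive_set gen_monoid :: "rat set \<Rightarrow> rat set" for S :: "rat set" where
  zero: "0 \<in> gen_monoid S"
| gen_add: "s \<in> S \<Longrightarrow> x \<in> gen_monoid S \<Longrightarrow> s + x \<in> gen_monoid S"

definition puiseux_monoid :: "rat set \<Rightarrow> bool" where
  "puiseux_monoid M \<longleftrightarrow> (\<exists>S. (\<forall>s\<in>S. s \<ge> 0) \<and> M = gen_monoid S)"

definition almost_reciprocal_pm :: "rat set \<Rightarrow> bool" where
  "almost_reciprocal_pm M \<longleftrightarrow>
     (\<exists>c d :: nat \<Rightarrow> nat.
        strict_mono d \<and> (\<forall>n. 0 < d n) \<and> (\<forall>m n. m \<noteq> n \<longrightarrow> coprime (d m) (d n)) \<and>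
        (\<forall>n. 0 < c n) \<and> (\<forall>n. coprime (c n) (d n)) \<and>
        M = gen_monoid (range (\<lambda>n. of_nat (c n) / of_nat (d n))))"

definition atoms :: "rat set \<Rightarrow> rat set" where
  "atoms M = {a \<in> M. a \<noteq> 0 \<and> (\<forall>x\<in>M. \<forall>y\<in>M. a = x + y \<longrightarrow> x = 0 \<or> y = 0)}"

definition atomic :: "rat set \<Rightarrow> bool" where
  "atomic M \<longleftrightarrow> (\<forall>x\<in>M. \<exists>z. set_mset z \<subseteq> atoms M \<and> sum_mset z = x)"

definition factorizations_len :: "rat set \<Rightarrow> rat \<Rightarrow> nat \<Rightarrow> rat multiset set" where
  "factorizations_len M x l = {z. set_mset z \<subseteq> atoms M \<and> sum_mset z = x \<and> size z = l}"

definition LFFM :: "rat set \<Rightarrow> bool" where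
  "LFFM M \<longleftrightarrow> atomic M \<and> (\<forall>x\<in>M. x \<noteq> 0 \<longrightarrow> (\<forall>l. finite (factorizations_len M x l)))"

end

theory Submission
  imports Defs
begin

text \<open>Multiplying a relation
  \<open>\<Sum> k\<^sub>i g i = \<Sum> k'\<^sub>i g i\<close> by the product of the finitely many denominators involved
  and reducing modulo d n shows, since d n is coprime to c n and to all other d i, that d n
  divides \<open>k\<^sub>n - k'\<^sub>n\<close>. Hence every generator with d n > 1 is an atom. At most one
  generator has d n = 1; if it is not an atom, it is a sum of generators with other indices,
  which are atoms, so the monoid is atomic. Finally, if x has a fixed representation in which
  g n does not occur, then g n occurs a positive multiple of d n times in any factorization of
  x in which it occurs at all; so a factorization of length l uses only the finitely many g n
  with d n \<le> l or occurring in that representation.\<close>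

lemma gen_monoid_range_iff:
  "x \<in> gen_monoid (range f) \<longleftrightarrow> (\<exists>K. x = \<Sum>\<^sub># (image_mset f K))"
proof
  assume "x \<in> gen_monoid (range f)"
  then show "\<exists>K. x = \<Sum>\<^sub># (image_mset f K)"
  proof induction
    case zero
    show ?case by (rule exI[of _ "{#}"]) simp
  next
    case (gen_add s x)
    then obtain K i where "x = \<Sum>\<^sub># (image_mset f K)" "s = f i" by auto
    then show ?case by (intro exI[of _ "add_mset i K"]) simp
  qed
next
  assume "\<exists>K. x = \<Sum>\<^sub># (image_mset f K)"
  then obtain K where "x = \<Sum>\<^sub># (image_mset f K)" by blast
  moreover have "\<Sum>\<^sub># (image_mset f K) \<in> gen_monoid (range f)"
    by (induction K) (auto intro: gen_monoid.intros)
  ultimately show "x \<in> gen_monoid (range f)" by simp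
qed

lemma atoms_gen_monoid_subset: "atoms (gen_monoid S) \<subseteq> S"
proof -
  have "a \<in> atoms (gen_monoid S) \<longrightarrow> a \<in> S" if "a \<in> gen_monoid S" for a
    using that
  proof induction
    case zero
    show ?case by (simp add: atoms_def)
  next
    case (gen_add s x)
    show ?case
    proof
      assume atom: "s + x \<in> atoms (gen_monoid S)"
      have "s \<in> gen_monoid S" using gen_add.hyps(1) gen_monoid.intros by fastforce
      then have "s = 0 \<or> x = 0" using atom gen_add.hyps(2) unfolding atoms_def by blast
      then show "s + x \<in> S" using atom gen_add by auto
    qed
  qed
  then show ?thesis unfolding atoms_def by blast
qed

lemma atomic_gen_monoid:
  assumes "\<And>s. s \<in> S \<Longrightarrow> \<exists>z. set_mset z \<subseteq> atoms (gen_monoid S) \<and> \<Sum>\<^sub># z = s"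
  shows "atomic (gen_monoid S)"
  unfolding atomic_def
proof
  fix x assume "x \<in> gen_monoid S"
  then show "\<exists>z. set_mset z \<subseteq> atoms (gen_monoid S) \<and> \<Sum>\<^sub># z = x"
  proof induction
    case zero
    show ?case by (rule exI[of _ "{#}"]) simp
  next
    case (gen_add s x)
    then obtain z w where "set_mset z \<subseteq> atoms (gen_monoid S)" "\<Sum>\<^sub># z = x"
      and "set_mset w \<subseteq> atoms (gen_monoid S)" "\<Sum>\<^sub># w = s"
      using assms by blast
    then show ?case by (intro exI[of _ "w + z"]) auto
  qed
qed

lemma image_mset_if_set_mset_subset_range:
  assumes "set_mset z \<subseteq> range f"
  shows "\<exists>K. z = image_mset f K"
  using assms
proof (induction z)
  case empty
  show ?case by (rule exI[of _ "{#}"]) simp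
next
  case (add a z)
  then obtain K i where "z = image_mset f K" "a = f i" by auto
  then show ?case by (intro exI[of _ "add_mset i K"]) simp
qed

lemma sum_mset_image_mset_eq_sum_count:
  assumes "finite S" "set_mset K \<subseteq> S"
  shows "\<Sum>\<^sub># (image_mset f K) = (\<Sum>i\<in>S. of_nat (count K i) * (f i :: 'a :: semiring_1))"
  using assms(2)
proof (induction K)
  case empty
  show ?case by simp
next
  case (add a K)
  then have "a \<in> S" by simp
  have "(\<Sum>i\<in>S. of_nat (count (add_mset a K) i) * f i)
      = (\<Sum>i\<in>S. of_nat (count K i) * f i + (if i = a then f i else 0))"
    by (rule sum.cong) (auto simp: algebra_simps)
  also have "\<dots> = (\<Sum>i\<in>S. of_nat (count K i) * f i) + f a"
    using \<open>a \<in> S\<close> assms(1) by (simp add: sum.distrib)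
  finally show ?case using add by (simp add: add.commute)
qed

lemma dvd_numerator_if_sum_fractions_eq_0:
  fixes a d :: "'i \<Rightarrow> int"
  assumes "finite S" "n \<in> S" "\<And>i. i \<in> S \<Longrightarrow> d i \<noteq> 0"
    and "\<And>i. i \<in> S \<Longrightarrow> i \<noteq> n \<Longrightarrow> coprime (d n) (d i)"
    and "(\<Sum>i\<in>S. of_int (a i) / of_int (d i)) = (0 :: rat)"
  shows "d n dvd a n"
proof -
  define D where "D i = (\<Prod>j\<in>S - {i}. d j)" for i
  have cleared: "of_int (\<Prod>j\<in>S. d j) * (of_int (a i) / of_int (d i)) = (of_int (a i * D i) :: rat)"
    if "i \<in> S" for i
    using that assms(1,3) by (simp add: D_def prod.remove)
  have "(of_int (\<Sum>i\<in>S. a i * D i) :: rat)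
      = of_int (\<Prod>j\<in>S. d j) * (\<Sum>i\<in>S. of_int (a i) / of_int (d i))"
    unfolding of_int_sum sum_distrib_left by (rule sum.cong[OF refl], rule cleared[symmetric])
  then have "(\<Sum>i\<in>S. a i * D i) = 0" using assms(5) by (metis mult_zero_right of_int_eq_0_iff)
  then have "a n * D n = - (\<Sum>i\<in>S - {n}. a i * D i)"
    using assms(1,2) by (simp add: sum.remove)
  moreover have "d n dvd (\<Sum>i\<in>S - {n}. a i * D i)"
    using assms(1,2) by (intro dvd_sum dvd_mult dvd_prodI) (auto simp: D_def)
  ultimately have "d n dvd a n * D n" by simp
  moreover have "coprime (d n) (D n)"
    unfolding D_def by (rule prod_coprime_right) (use assms(4) in auto)
  ultimately show ?thesis by (simp add: coprime_dvd_mult_left_iff)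
qed

locale almost_reciprocal =
  fixes c d :: "nat \<Rightarrow> nat"
  assumes strict_mono_d: "strict_mono d" and d_pos: "\<And>n. 0 < d n"
    and coprime_d: "\<And>m n. m \<noteq> n \<Longrightarrow> coprime (d m) (d n)"
    and c_pos: "\<And>n. 0 < c n" and coprime_c_d: "\<And>n. coprime (c n) (d n)"
begin

definition g :: "nat \<Rightarrow> rat" where "g n = of_nat (c n) / of_nat (d n)"

abbreviation M :: "rat set" where "M \<equiv> gen_monoid (range g)"

lemma g_pos: "0 < g n"
  using c_pos d_pos by (simp add: g_def)

lemma g_in_M: "g n \<in> M"
  unfolding gen_monoid_range_iff by (rule exI[of _ "{#n#}"]) simp

lemma sum_g_nonneg: "0 \<le> \<Sum>\<^sub># (image_mset g K)"
  by (induction K) (auto intro: add_nonneg_nonneg less_imp_le g_pos)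

lemma g_le_sum_g:
  assumes "i \<in># K"
  shows "g i \<le> \<Sum>\<^sub># (image_mset g K)"
proof -
  obtain K' where "K = add_mset i K'" using assms by (metis mset_add)
  then show ?thesis using sum_g_nonneg[of K'] by simp
qed

lemma d_dvd_count_diff_if_sum_g_eq:
  assumes "\<Sum>\<^sub># (image_mset g K) = \<Sum>\<^sub># (image_mset g K')"
  shows "int (d n) dvd int (count K n) - int (count K' n)"
proof -
  define S where "S = insert n (set_mset K \<union> set_mset K')"
  define a where "a i = (int (count K i) - int (count K' i)) * int (c i)" for i
  have "finite S" "n \<in> S" "set_mset K \<subseteq> S" "set_mset K' \<subseteq> S" by (auto simp: S_def)
  have "of_int (a i) / of_int (int (d i)) = of_nat (count K i) * g i - of_nat (count K' i) * g i"
    for i by (simp add: a_def g_def diff_divide_distrib algebra_simps)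
  then have "(\<Sum>i\<in>S. of_int (a i) / of_int (int (d i)))
      = \<Sum>\<^sub># (image_mset g K) - \<Sum>\<^sub># (image_mset g K')"
    using sum_mset_image_mset_eq_sum_count[OF \<open>finite S\<close> \<open>set_mset K \<subseteq> S\<close>, of g]
      sum_mset_image_mset_eq_sum_count[OF \<open>finite S\<close> \<open>set_mset K' \<subseteq> S\<close>, of g]
    by (simp add: sum_subtractf)
  then have "int (d n) dvd a n"
    using \<open>finite S\<close> \<open>n \<in> S\<close> assms d_pos coprime_d
    by (intro dvd_numerator_if_sum_fractions_eq_0[of S n "\<lambda>i. int (d i)"]) auto
  moreover have "coprime (int (d n)) (int (c n))"
    using coprime_c_d[of n] by (simp add: coprime_commute)
  ultimately show ?thesis by (simp add: a_def coprime_dvd_mult_left_iff)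
qed

lemma split_non_atom_g:
  assumes "g i \<notin> atoms M"
  obtains K where "g i = \<Sum>\<^sub># (image_mset g K)" "i \<notin># K"
proof -
  obtain x y where "x \<in> M" "y \<in> M" "g i = x + y" "x \<noteq> 0" "y \<noteq> 0"
    using assms g_in_M g_pos[of i] unfolding atoms_def by auto
  moreover obtain Kx Ky where "x = \<Sum>\<^sub># (image_mset g Kx)" "y = \<Sum>\<^sub># (image_mset g Ky)"
    using \<open>x \<in> M\<close> \<open>y \<in> M\<close> gen_monoid_range_iff by meson
  moreover have "i \<notin># Kx + Ky"
    using calculation g_le_sum_g[of i Kx] g_le_sum_g[of i Ky]
      sum_g_nonneg[of Kx] sum_g_nonneg[of Ky] by auto
  ultimately show ?thesis by (intro that[of "Kx + Ky"]) auto
qed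

lemma g_in_atoms_if_d_neq_1:
  assumes "d n \<noteq> 1"
  shows "g n \<in> atoms M"
proof (rule ccontr)
  assume "g n \<notin> atoms M"
  then obtain K where "\<Sum>\<^sub># (image_mset g K) = \<Sum>\<^sub># (image_mset g {#n#})" "n \<notin># K"
    using split_non_atom_g by force
  then have "int (d n) dvd - 1"
    using d_dvd_count_diff_if_sum_g_eq[of K "{#n#}" n] by (simp add: not_in_iff)
  then show False using assms by simp
qed

lemma g_sum_of_atoms: "\<exists>z. set_mset z \<subseteq> atoms M \<and> \<Sum>\<^sub># z = g i"
proof (cases "g i \<in> atoms M")
  case True
  then show ?thesis by (intro exI[of _ "{#g i#}"]) simp
next
  case False
  then obtain K where K: "g i = \<Sum>\<^sub># (image_mset g K)" "i \<notin># K"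
    by (rule split_non_atom_g)
  have "d j \<noteq> 1" if "j \<in># K" for j
  proof -
    have "d i = 1" using False g_in_atoms_if_d_neq_1 by blast
    moreover have "d j \<noteq> d i" using that K(2) strict_mono_eq[OF strict_mono_d] by auto
    ultimately show ?thesis by simp
  qed
  then show ?thesis using K(1) g_in_atoms_if_d_neq_1 by (intro exI[of _ "image_mset g K"]) auto
qed

lemma atomic_M: "atomic M"
  by (rule atomic_gen_monoid) (use g_sum_of_atoms in blast)

lemma finite_factorizations_len:
  assumes "x \<in> M"
  shows "finite (factorizations_len M x l)"
proof -
  obtain K0 where K0: "x = \<Sum>\<^sub># (image_mset g K0)"
    using assms gen_monoid_range_iff by blast
  define A where "A = g ` ({i. d i \<le> l} \<union> set_mset K0)"
  have "{i. d i \<le> l} \<subseteq> {..l}"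
    using strict_mono_imp_increasing[OF strict_mono_d] order_trans by auto
  then have "finite A" unfolding A_def by (auto intro: finite_subset)
  have "factorizations_len M x l \<subseteq> multisets_of_size A l"
  proof
    fix z assume "z \<in> factorizations_len M x l"
    then have z: "set_mset z \<subseteq> range g" "\<Sum>\<^sub># z = x" "size z = l"
      using atoms_gen_monoid_subset unfolding factorizations_len_def by auto
    then obtain K where K: "z = image_mset g K"
      using image_mset_if_set_mset_subset_range by blast
    have "i \<in> {i. d i \<le> l} \<union> set_mset K0" if "i \<in># K" for i
    proof (cases "i \<in># K0")
      case False
      have "int (d i) dvd int (count K i)"
        using d_dvd_count_diff_if_sum_g_eq[of K K0 i] K z(2) K0 False by (simp add: not_in_iff)
      then have "d i \<le> count K i" using that by (simp add: dvd_imp_le)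
      also have "\<dots> \<le> l" using K z(3) count_le_size[of K i] by simp
      finally show ?thesis by simp
    qed simp
    then show "z \<in> multisets_of_size A l"
      using K z(3) unfolding multisets_of_size_def A_def by auto
  qed
  then show ?thesis using finite_multisets_of_size[OF \<open>finite A\<close>] by (rule finite_subset)
qed

lemma LFFM_M: "LFFM M"
  unfolding LFFM_def using atomic_M finite_factorizations_len by blast

end

theorem corollary4p11:
  fixes M :: "rat set"
  assumes "almost_reciprocal_pm M"
  shows "LFFM M"
proof -
  obtain c d :: "nat \<Rightarrow> nat" where
    "strict_mono d" "\<forall>n. 0 < d n" "\<forall>m n. m \<noteq> n \<longrightarrow> coprime (d m) (d n)"
    "\<forall>n. 0 < c n" "\<forall>n. coprime (c n) (d n)"
    and M: "M = gen_monoid (range (\<lambda>n. of_nat (c n) / of_nat (d n)))"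
    using assms unfolding almost_reciprocal_pm_def by blast
  then interpret almost_reciprocal c d by unfold_locales auto
  show ?thesis using LFFM_M unfolding M g_def[abs_def] .
qed

end
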